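(* Let $f$ satisfy $(\mathcal A)$ and let $p\ge1$. Let $y_0\in\mathcal H$ and define recursively for $k\ge0$ $$\lambda_k=\|\nabla f(y_k)\|^{-\frac{p-1}{p}},\qquad y_{k+1}=\operatorname{prox}_{\lambda_k f}(y_k),$$ and assume $\nabla f(y_k)\neq0$ for all $k\ge0$. Then $f(y_{k+1})-\inf_{\mathcal H}f=o\big(k^{-(2-\frac1p)}\big)$ as $k\to+\infty$, and $(y_k)_{k\ge0}$ converges weakly to an element of $S=\operatorname{argmin} f$.
   Context: $\mathcal H$ is a real Hilbert space. Assumption $(\mathcal A)$: $f:\mathcal H\to\mathbb R$ is convex and continuously differentiable, $S=\operatorname{argmin}_{\mathcal H} f\neq\emptyset$, and $\nabla f$ is Lipschitz continuous on bounded subsets of $\mathcal H$. For $\lambda>0$, $\operatorname{prox}_{\lambda f}(y)=\operatorname{argmin}_{u\in\mathcal H}\{f(u)+\frac{1}{2\lambda}\|u-y\|^2\}$. *)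

theory Defs
  imports "HOL-Analysis.Analysis" "HOL-Library.Landau_Symbols"
begin

definition prox :: "real \<Rightarrow> ('a::real_normed_vector \<Rightarrow> real) \<Rightarrow> 'a \<Rightarrow> 'a" where
  "prox lam f y = (THE u. \<forall>v. f u + (1 / (2 * lam)) * (norm (u - y))\<^sup>2
                              \<le> f v + (1 / (2 * lam)) * (norm (v - y))\<^sup>2)"

definition weakly_converges :: "(nat \<Rightarrow> 'a::real_inner) \<Rightarrow> 'a \<Rightarrow> bool" where
  "weakly_converges y z \<longleftrightarrow> (\<forall>v. (\<lambda>k. inner (y k) v) \<longlonglongrightarrow> inner z v)"

end

(*
  Each proximal step is an implicit gradient step: y(k) - y(k+1) = lam(k) * grad f(y(k+1)).
  Monotonicity of grad f makes |grad f(y(k))| nonincreasing, so the step sizes lam(k) grow.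
  The gradient inequality gives the descent estimate
    f(y(k+1)) + lam(k) |grad f(y(k+1))|^2 <= f(y(k))
  and, for every minimizer z, Fejer monotonicity
    |y(k+1) - z|^2 + 2 lam(k) (f(y(k+1)) - min f) <= |y(k) - z|^2.
  Hence sum_k lam(k) (f(y(k+1)) - min f) < oo, and summing the descent estimate with
  weights k gives |grad f(y(n))| = O(1/n), i.e. lam(n) >= c n^((p-1)/p). A convergent series
  sum_k lam(k) e(k+1) with nonincreasing e >= 0 and such weights forces e(k) = o(k^-(2-1/p)).
  Weak convergence follows from Opial's lemma: the distances to each minimizer converge,
  and weak cluster points are minimizers since f(y(k)) -> min f and f is weakly lower
  semicontinuous. Weak sequential compactness of bounded sets comes from the Riesz
  representation theorem.
*)

theory Submission
  imports Defs "HOL-Library.Diagonal_Subsequence"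
begin

section \<open>Projections and the Riesz representation\<close>

lemma norm_midpoint_sq:
  fixes a b :: "'a::real_inner"
  shows "(norm ((1/2) *\<^sub>R (a + b)))\<^sup>2 = ((norm a)\<^sup>2 + (norm b)\<^sup>2) / 2 - (norm (a - b))\<^sup>2 / 4"
  unfolding power2_norm_eq_inner
  by (simp add: inner_simps inner_commute algebra_simps) (simp add: field_simps)

text \<open>A minimizing sequence of a midpoint-uniformly convex function is Cauchy.\<close>
lemma uniformly_convex_attains_min:
  fixes \<phi> :: "'a::{real_inner,complete_space} \<Rightarrow> real"
  assumes C: "closed C" "convex C" "C \<noteq> {}" and cont: "continuous_on C \<phi>"
    and bdd: "\<And>u. u \<in> C \<Longrightarrow> b \<le> \<phi> u" and c: "c > 0"
    and mid: "\<And>u w. u \<in> C \<Longrightarrow> w \<in> C \<Longrightarrow>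
       \<phi> ((1/2) *\<^sub>R (u + w)) \<le> (\<phi> u + \<phi> w) / 2 - c * (norm (u - w))\<^sup>2"
  shows "\<exists>u\<in>C. \<forall>w\<in>C. \<phi> u \<le> \<phi> w"
proof -
  define m where "m = Inf (\<phi> ` C)"
  have bddb: "bdd_below (\<phi> ` C)" using bdd by (intro bdd_belowI[of _ b]) auto
  have lb: "\<And>w. w \<in> C \<Longrightarrow> m \<le> \<phi> w" unfolding m_def using bddb by (simp add: cINF_lower)
  have "\<exists>u\<in>C. \<phi> u < m + 1 / Suc n" for n :: nat
    using cInf_lessD[of "\<phi> ` C" "m + 1 / Suc n"] C(3) unfolding m_def by auto
  then obtain u where uC: "\<And>n. u n \<in> C" and uphi: "\<And>n. \<phi> (u n) < m + 1 / Suc n" by metis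
  have midC: "(1/2) *\<^sub>R (v + w) \<in> C" if "v \<in> C" "w \<in> C" for v w
    using convexD[OF C(2) that, of "1/2" "1/2"] by (simp add: scaleR_add_right)
  have key: "c * (norm (u i - u j))\<^sup>2 \<le> (1 / Suc i + 1 / Suc j) / 2" for i j
    using lb[OF midC[OF uC[of i] uC[of j]]] mid[OF uC uC, of i j] uphi[of i] uphi[of j] by argo
  have "Cauchy u"
  proof (rule metric_CauchyI)
    fix e :: real assume e: "e > 0"
    then obtain M where M: "inverse (real (Suc M)) < c * e\<^sup>2" using reals_Archimedean[of "c * e\<^sup>2"] c e by auto
    have "dist (u i) (u j) < e" if "M \<le> i" "M \<le> j" for i j
    proof -
      have "1 / Suc i \<le> 1 / Suc M" "1 / Suc j \<le> 1 / Suc M" using that by (auto simp: frac_le)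
      then have "c * (norm (u i - u j))\<^sup>2 < c * e\<^sup>2" using key[of i j] M by (simp add: inverse_eq_divide)
      then have "(norm (u i - u j))\<^sup>2 < e\<^sup>2" using c by simp
      then show ?thesis using e by (simp add: dist_norm power_less_imp_less_base)
    qed
    then show "\<exists>M. \<forall>i\<ge>M. \<forall>j\<ge>M. dist (u i) (u j) < e" by blast
  qed
  then obtain l where l: "u \<longlonglongrightarrow> l" using Cauchy_convergent_iff convergent_def by blast
  have lC: "l \<in> C" using closed_sequentially[OF C(1)] uC l by blast
  have "(\<lambda>n. \<phi> (u n)) \<longlonglongrightarrow> \<phi> l"
    using cont lC uC l unfolding continuous_on_sequentially comp_def by blast
  moreover have "(\<lambda>n. \<phi> (u n)) \<longlonglongrightarrow> m"
  proof (rule tendsto_sandwich[of "\<lambda>n. m" _ _ "\<lambda>n. m + 1 / Suc n"])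
    have "(\<lambda>n. m + 1 / real (Suc n)) \<longlonglongrightarrow> m + 0"
      by (intro tendsto_add tendsto_const LIMSEQ_Suc[OF lim_const_over_n])
    then show "(\<lambda>n. m + 1 / real (Suc n)) \<longlonglongrightarrow> m" by simp
    show "\<forall>\<^sub>F n in sequentially. \<phi> (u n) \<le> m + 1 / Suc n"
      using uphi by (intro always_eventually allI less_imp_le)
  qed (use lb uC in auto)
  ultimately have "\<phi> l = m" by (rule LIMSEQ_unique)
  then show ?thesis using lC lb by auto
qed

lemma closest_point_exists_hilbert:
  fixes v :: "'a::{real_inner,complete_space}"
  assumes "closed C" "convex C" "C \<noteq> {}"
  shows "\<exists>a\<in>C. \<forall>c\<in>C. norm (v - a) \<le> norm (v - c)"
proof -
  have "\<exists>a\<in>C. \<forall>c\<in>C. (norm (v - a))\<^sup>2 \<le> (norm (v - c))\<^sup>2"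
  proof (rule uniformly_convex_attains_min[OF assms, of _ 0 "1/4"])
    fix u w
    have "v - (1/2) *\<^sub>R (u + w) = (1/2) *\<^sub>R ((v - u) + (v - w))"
      by (simp add: algebra_simps flip: scaleR_add_left)
    moreover have "(v - u) - (v - w) = w - u" by simp
    ultimately show "(norm (v - (1/2) *\<^sub>R (u + w)))\<^sup>2
        \<le> ((norm (v - u))\<^sup>2 + (norm (v - w))\<^sup>2) / 2 - 1/4 * (norm (u - w))\<^sup>2"
      by (simp only: norm_midpoint_sq) (simp add: norm_minus_commute)
  qed (auto intro!: continuous_intros)
  then show ?thesis by (meson norm_ge_zero power2_le_imp_le)
qed

lemma closest_point_subspace_orthogonal:
  fixes v a c :: "'a::real_inner"
  assumes S: "subspace C" and a: "a \<in> C" and c: "c \<in> C"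
    and min: "\<forall>c\<in>C. norm (v - a) \<le> norm (v - c)"
  shows "inner (v - a) c = 0"
proof (cases "c = 0")
  case False
  define q where "q = inner (v - a) c"
  define N where "N = (norm c)\<^sup>2"
  have N: "N > 0" using False unfolding N_def by simp
  have ineq: "2 * t * q \<le> t\<^sup>2 * N" for t :: real
  proof -
    have "a + t *\<^sub>R c \<in> C" using S a c by (simp add: subspace_add subspace_scale)
    then have "norm (v - a) \<le> norm ((v - a) - t *\<^sub>R c)" using min by (simp add: algebra_simps)
    then have "(norm (v - a))\<^sup>2 \<le> (norm ((v - a) - t *\<^sub>R c))\<^sup>2" by (simp add: power_mono)
    then show ?thesis unfolding power2_norm_eq_inner q_def N_def
      by (simp add: inner_simps inner_commute power2_eq_square algebra_simps)
  qed
  have "2 * (q / N) * q \<le> (q / N)\<^sup>2 * N" by (rule ineq)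
  then have "q\<^sup>2 / N \<le> 0" using N by (simp add: power2_eq_square field_simps)
  then have "q\<^sup>2 \<le> 0" using N by (simp add: divide_le_0_iff)
  then show ?thesis unfolding q_def by simp
qed simp

lemma riesz_representation:
  fixes l :: "'a::{real_inner,complete_space} \<Rightarrow> real"
  assumes "bounded_linear l"
  shows "\<exists>z. \<forall>v. l v = inner z v"
proof (cases "\<forall>v. l v = 0")
  case True then show ?thesis by (intro exI[of _ 0]) simp
next
  case False
  then obtain v0 where v0: "l v0 \<noteq> 0" by blast
  interpret l: bounded_linear l by (rule assms)
  define N where "N = {v. l v = 0}"
  have sN: "subspace N" unfolding N_def subspace_def by (simp add: l.add l.scale)
  have cN: "closed N" unfolding N_def by (intro closed_Collect_eq continuous_intros l.continuous_on)
  obtain a where aN: "a \<in> N" and amin: "\<forall>c\<in>N. norm (v0 - a) \<le> norm (v0 - c)"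
    using closest_point_exists_hilbert[OF cN subspace_imp_convex[OF sN]] sN
    unfolding subspace_def by blast
  text \<open>The normal vector \<open>w\<close> of the kernel, rescaled, represents \<open>l\<close>.\<close>
  define w where "w = v0 - a"
  have lw: "l w = l v0" using aN unfolding w_def N_def by (simp add: l.diff)
  have orth: "c \<in> N \<Longrightarrow> inner w c = 0" for c
    unfolding w_def using closest_point_subspace_orthogonal[OF sN aN _ amin] by blast
  have nw: "inner w w \<noteq> 0" using lw v0 l.zero by auto
  have "l v = inner ((l w / inner w w) *\<^sub>R w) v" for v
  proof -
    have "v - (l v / l w) *\<^sub>R w \<in> N" unfolding N_def using lw v0 by (simp add: l.diff l.scale)
    then have "inner w (v - (l v / l w) *\<^sub>R w) = 0" by (rule orth)
    then have "inner w v = (l v / l w) * inner w w" by (simp add: inner_simps)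
    then show ?thesis using nw lw v0 by (simp add: inner_simps)
  qed
  then show ?thesis by blast
qed

section \<open>Weak sequential compactness and Opial's lemma\<close>

lemma bounded_seq_inner_convergent_subseq:
  fixes x :: "nat \<Rightarrow> 'a::real_inner"
  assumes K: "\<And>n. norm (x n) \<le> K"
  shows "\<exists>r. strict_mono r \<and> (\<forall>m. convergent (\<lambda>j. inner (x (r j)) (x m)))"
proof -
  define P where "P = (\<lambda>m (s::nat\<Rightarrow>nat). convergent (\<lambda>j. inner (x (s j)) (x m)))"
  interpret subseqs P
  proof
    fix n and s :: "nat \<Rightarrow> nat"
    have "bounded (range (\<lambda>j. inner (x (s j)) (x n)))"
    proof (rule boundedI[of _ "K * norm (x n)"])
      fix t assume "t \<in> range (\<lambda>j. inner (x (s j)) (x n))"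
      then obtain j where t: "t = inner (x (s j)) (x n)" by blast
      have "norm (inner (x (s j)) (x n)) \<le> norm (x (s j)) * norm (x n)"
        unfolding real_norm_def by (rule Cauchy_Schwarz_ineq2)
      also have "\<dots> \<le> K * norm (x n)" using K by (simp add: mult_right_mono)
      finally show "norm t \<le> K * norm (x n)" unfolding t .
    qed
    then obtain l r where "strict_mono r" "((\<lambda>j. inner (x (s j)) (x n)) \<circ> r) \<longlonglongrightarrow> l"
      using bounded_imp_convergent_subsequence by blast
    then show "\<exists>r'. strict_mono r' \<and> P n (s \<circ> r')"
      unfolding P_def convergent_def by (auto simp: comp_def)
  qed
  have "P m (diagseq \<circ> (+) (Suc m))" for m
  proof (rule diagseq_holds)
    fix r s n assume "strict_mono (r::nat\<Rightarrow>nat)" "P n s"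
    then show "P n (s \<circ> r)" unfolding P_def
      using convergent_subseq_convergent[of "\<lambda>j. inner (x (s j)) (x n)" r] by (simp add: comp_def)
  qed
  have "convergent (\<lambda>j. inner (x (diagseq j)) (x m))" for m
  proof -
    obtain L where "(\<lambda>j. inner (x (diagseq (Suc m + j))) (x m)) \<longlonglongrightarrow> L"
      using \<open>P m (diagseq \<circ> (+) (Suc m))\<close> unfolding P_def convergent_def comp_def by blast
    then have "(\<lambda>j. inner (x (diagseq (j + Suc m))) (x m)) \<longlonglongrightarrow> L" by (simp add: add.commute)
    then have "(\<lambda>j. inner (x (diagseq j)) (x m)) \<longlonglongrightarrow> L" by (rule LIMSEQ_offset)
    then show ?thesis unfolding convergent_def by blast
  qed
  then show ?thesis using subseq_diagseq by blast
qed

lemma subspace_inner_convergent: "subspace {v. convergent (\<lambda>j. inner (X j) v)}"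
  unfolding subspace_def convergent_def
  by (auto simp: inner_add_right intro: tendsto_add tendsto_mult_left)

lemma closed_inner_convergent:
  fixes X :: "nat \<Rightarrow> 'a::real_inner"
  assumes K: "\<And>j. norm (X j) \<le> K"
  shows "closed {v. convergent (\<lambda>j. inner (X j) v)}"
  unfolding closed_sequential_limits
proof (intro allI impI, elim conjE)
  fix vs v assume conv: "\<forall>n. vs n \<in> {v. convergent (\<lambda>j. inner (X j) v)}" and lim: "vs \<longlonglongrightarrow> v"
  have K0: "K \<ge> 0" using K[of 0] norm_ge_zero order_trans by blast
  have "Cauchy (\<lambda>j. inner (X j) v)"
  proof (rule metric_CauchyI)
    fix e :: real assume e: "e > 0"
    have "e / (3 * (K + 1)) > 0" using e K0 by simp
    then obtain n where n: "norm (v - vs n) < e / (3 * (K + 1))"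
      using lim unfolding LIMSEQ_iff dist_norm by (metis norm_minus_commute order_refl)
    have "Cauchy (\<lambda>j. inner (X j) (vs n))" using conv by (simp add: convergent_Cauchy)
    then obtain M where M: "\<forall>i\<ge>M. \<forall>j\<ge>M. dist (inner (X i) (vs n)) (inner (X j) (vs n)) < e / 3"
      using e metric_CauchyD[of "\<lambda>j. inner (X j) (vs n)" "e / 3"] by force
    have near: "\<bar>inner (X i) (v - vs n)\<bar> \<le> e / 3" for i
    proof -
      have "\<bar>inner (X i) (v - vs n)\<bar> \<le> norm (X i) * norm (v - vs n)" by (rule Cauchy_Schwarz_ineq2)
      also have "\<dots> \<le> (K + 1) * (e / (3 * (K + 1)))" using n K[of i] K0 by (intro mult_mono) auto
      also have "\<dots> = e / 3" using K0 by (simp add: field_simps)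
      finally show ?thesis .
    qed
    have "dist (inner (X i) v) (inner (X j) v) < e" if "M \<le> i" "M \<le> j" for i j
    proof -
      have "inner (X i) v - inner (X j) v = inner (X i) (v - vs n) - inner (X j) (v - vs n)
            + (inner (X i) (vs n) - inner (X j) (vs n))" by (simp add: inner_diff_right)
      moreover have "\<bar>inner (X i) (vs n) - inner (X j) (vs n)\<bar> < e / 3"
        using M that by (auto simp: dist_real_def)
      ultimately show ?thesis using near[of i] near[of j] unfolding dist_real_def by linarith
    qed
    then show "\<exists>M. \<forall>i\<ge>M. \<forall>j\<ge>M. dist (inner (X i) v) (inner (X j) v) < e" by blast
  qed
  then show "v \<in> {v. convergent (\<lambda>j. inner (X j) v)}" by (simp add: Cauchy_convergent_iff)
qed

lemma weakly_convergent_if_inner_convergent: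
  fixes X :: "nat \<Rightarrow> 'a::{real_inner,complete_space}"
  assumes K: "\<And>j. norm (X j) \<le> K" and conv: "\<And>v. convergent (\<lambda>j. inner (X j) v)"
  shows "\<exists>z. weakly_converges X z"
proof -
  define l where "l v = lim (\<lambda>j. inner (X j) v)" for v
  have lt: "(\<lambda>j. inner (X j) v) \<longlonglongrightarrow> l v" for v
    using conv unfolding l_def by (simp add: convergent_LIMSEQ_iff)
  have "bounded_linear l"
  proof (rule bounded_linear_intro[of _ K])
    fix v w
    show "l (v + w) = l v + l w"
      using lt[of "v + w"] tendsto_add[OF lt lt, of v w] LIMSEQ_unique by (auto simp: inner_add_right)
  next
    fix c :: real and v
    show "l (c *\<^sub>R v) = c *\<^sub>R l v"
      using lt[of "c *\<^sub>R v"] tendsto_mult_left[OF lt, of c v] LIMSEQ_unique by auto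
  next
    fix v
    have "\<bar>inner (X j) v\<bar> \<le> K * norm v" for j
      using Cauchy_Schwarz_ineq2[of "X j" v] K[of j] by (meson mult_right_mono norm_ge_zero order_trans)
    then have "\<bar>l v\<bar> \<le> K * norm v" by (intro LIMSEQ_le_const2[OF tendsto_rabs[OF lt]]) auto
    then show "norm (l v) \<le> norm v * K" by (simp add: mult.commute)
  qed
  then obtain z where "\<And>v. l v = inner z v" using riesz_representation by blast
  then show ?thesis unfolding weakly_converges_def using lt by metis
qed

text \<open>The subsequence along which all \<open>\<langle>x\<^sub>j, x\<^sub>m\<rangle>\<close> converge converges weakly on the closed
  span of the \<open>x\<^sub>m\<close> and trivially on its orthogonal complement.\<close>
lemma bounded_seq_weakly_convergent_subseq:
  fixes x :: "nat \<Rightarrow> 'a::{real_inner,complete_space}"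
  assumes K: "\<And>n. norm (x n) \<le> K"
  shows "\<exists>r z. strict_mono r \<and> weakly_converges (x \<circ> r) z"
proof -
  obtain r where r: "strict_mono r" and cm: "\<And>m. convergent (\<lambda>j. inner (x (r j)) (x m))"
    using bounded_seq_inner_convergent_subseq[of x K] K by blast
  define D where "D = {v. convergent (\<lambda>j. inner ((x \<circ> r) j) v)}"
  have sD: "subspace D" and cD: "closed D"
    unfolding D_def using subspace_inner_convergent closed_inner_convergent[of "x \<circ> r" K] K by auto
  have "v \<in> D" for v
  proof -
    obtain a where aD: "a \<in> D" and amin: "\<forall>c\<in>D. norm (v - a) \<le> norm (v - c)"
      using closest_point_exists_hilbert[OF cD subspace_imp_convex[OF sD]] sD
      unfolding subspace_def by blast
    have "x m \<in> D" for m using cm unfolding D_def by simp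
    then have "inner (x (r j)) (v - a) = 0" for j
      using closest_point_subspace_orthogonal[OF sD aD _ amin] by (metis inner_commute)
    then have "inner ((x \<circ> r) j) v = inner ((x \<circ> r) j) a" for j by (simp add: inner_diff_right)
    then show ?thesis using aD unfolding D_def by simp
  qed
  then have "\<exists>z. weakly_converges (x \<circ> r) z"
    using K unfolding D_def by (intro weakly_convergent_if_inner_convergent) auto
  then show ?thesis using r by blast
qed

lemma weak_cluster_point_unique:
  fixes y :: "nat \<Rightarrow> 'a::real_inner"
  assumes d1: "convergent (\<lambda>k. norm (y k - z1))" and d2: "convergent (\<lambda>k. norm (y k - z2))"
    and r1: "strict_mono r1" and w1: "weakly_converges (y \<circ> r1) z1"
    and r2: "strict_mono r2" and w2: "weakly_converges (y \<circ> r2) z2"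
  shows "z1 = z2"
proof -
  text \<open>\<open>\<langle>y\<^sub>k, z\<^sub>1 - z\<^sub>2\<rangle>\<close> is a combination of the two convergent distances, so it converges.\<close>
  define h where "h k = inner (y k) (z1 - z2)" for k
  have h: "h = (\<lambda>k. ((norm (y k - z2))\<^sup>2 - (norm (y k - z1))\<^sup>2 + (norm z1)\<^sup>2 - (norm z2)\<^sup>2) / 2)"
    unfolding h_def power2_norm_eq_inner by (rule ext) (simp add: inner_simps inner_commute field_simps)
  obtain L1 L2 where "(\<lambda>k. norm (y k - z1)) \<longlonglongrightarrow> L1" "(\<lambda>k. norm (y k - z2)) \<longlonglongrightarrow> L2"
    using d1 d2 unfolding convergent_def by blast
  then have "h \<longlonglongrightarrow> (L2\<^sup>2 - L1\<^sup>2 + (norm z1)\<^sup>2 - (norm z2)\<^sup>2) / 2"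
    unfolding h by (auto intro!: tendsto_intros)
  then obtain L where hL: "h \<longlonglongrightarrow> L" by blast
  have "(\<lambda>j. h (r1 j)) \<longlonglongrightarrow> inner z1 (z1 - z2)" "(\<lambda>j. h (r2 j)) \<longlonglongrightarrow> inner z2 (z1 - z2)"
    using w1 w2 unfolding weakly_converges_def h_def comp_def by blast+
  moreover have "(\<lambda>j. h (r1 j)) \<longlonglongrightarrow> L" "(\<lambda>j. h (r2 j)) \<longlonglongrightarrow> L"
    using LIMSEQ_subseq_LIMSEQ[OF hL r1] LIMSEQ_subseq_LIMSEQ[OF hL r2] by (simp_all add: comp_def)
  ultimately have "inner z1 (z1 - z2) = inner z2 (z1 - z2)" using LIMSEQ_unique by metis
  then have "inner (z1 - z2) (z1 - z2) = 0" by (simp add: inner_diff_left)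
  then show ?thesis by simp
qed

lemma weakly_converges_if_unique_weak_cluster_point:
  fixes y :: "nat \<Rightarrow> 'a::{real_inner,complete_space}"
  assumes K: "\<And>n. norm (y n) \<le> K"
    and unique: "\<And>r z. strict_mono r \<Longrightarrow> weakly_converges (y \<circ> r) z \<Longrightarrow> z = z0"
  shows "weakly_converges y z0"
  unfolding weakly_converges_def
proof (rule ccontr)
  assume "\<not> (\<forall>v. (\<lambda>k. inner (y k) v) \<longlonglongrightarrow> inner z0 v)"
  then obtain v \<epsilon> where \<epsilon>: "\<epsilon> > 0" and far: "\<forall>m. \<exists>n\<ge>m. \<epsilon> \<le> \<bar>inner (y n) v - inner z0 v\<bar>"
    unfolding LIMSEQ_iff by (auto simp: not_less)
  define F where "F = {n. \<epsilon> \<le> \<bar>inner (y n) v - inner z0 v\<bar>}"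
  have "infinite F" unfolding infinite_nat_iff_unbounded_le F_def using far by auto
  then have \<sigma>: "strict_mono (enumerate F)" and \<sigma>F: "\<And>j. enumerate F j \<in> F"
    by (simp_all add: strict_mono_enumerate enumerate_in_set)
  obtain r z where r: "strict_mono r" and w: "weakly_converges ((y \<circ> enumerate F) \<circ> r) z"
    using bounded_seq_weakly_convergent_subseq[of "y \<circ> enumerate F" K] K by auto
  have "z = z0" using unique[OF strict_mono_o[OF \<sigma> r]] w by (simp add: comp_assoc)
  then have "(\<lambda>j. inner (y (enumerate F (r j))) v) \<longlonglongrightarrow> inner z0 v"
    using w unfolding weakly_converges_def comp_def by blast
  then obtain M where "\<forall>j\<ge>M. \<bar>inner (y (enumerate F (r j))) v - inner z0 v\<bar> < \<epsilon>"
    using \<epsilon> unfolding LIMSEQ_iff by auto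
  then show False using \<sigma>F[of "r M"] unfolding F_def by auto
qed

lemma opial_weak_convergence:
  fixes y :: "nat \<Rightarrow> 'a::{real_inner,complete_space}"
  assumes "S \<noteq> {}" and dist: "\<And>z. z \<in> S \<Longrightarrow> convergent (\<lambda>k. norm (y k - z))"
    and cluster: "\<And>r z. strict_mono r \<Longrightarrow> weakly_converges (y \<circ> r) z \<Longrightarrow> z \<in> S"
  shows "\<exists>z\<in>S. weakly_converges y z"
proof -
  obtain s where s: "s \<in> S" using assms(1) by blast
  obtain B where B: "\<And>k. norm (y k - s) \<le> B"
    using convergent_imp_Bseq[OF dist[OF s]] by (auto simp: Bseq_def)
  have K: "norm (y k) \<le> norm s + B" for k
    using norm_triangle_ineq[of "y k - s" s] B[of k] by simp
  obtain r z where r: "strict_mono r" and w: "weakly_converges (y \<circ> r) z"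
    using bounded_seq_weakly_convergent_subseq[of y "norm s + B"] K by blast
  have zS: "z \<in> S" using cluster[OF r w] .
  have "weakly_converges y z"
    using K by (rule weakly_converges_if_unique_weak_cluster_point)
      (use weak_cluster_point_unique dist cluster zS r w in blast)
  then show ?thesis using zS by blast
qed
section \<open>Differentiable convex functions and their proximal maps\<close>

lemma convex_on_gradient_ineq:
  fixes f :: "'a::real_inner \<Rightarrow> real"
  assumes convex: "convex_on UNIV f" and grad: "(f has_derivative (\<lambda>h. inner g h)) (at x)"
  shows "f x + inner g (y - x) \<le> f y"
proof -
  define \<phi> where "\<phi> t = f (x + t *\<^sub>R (y - x))" for t :: real
  have "convex_on UNIV \<phi>"
  proof (rule convex_onI)
    fix t a b :: real assume t: "0 < t" "t < 1"
    have "x + ((1 - t) *\<^sub>R a + t *\<^sub>R b) *\<^sub>R (y - x)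
        = (1 - t) *\<^sub>R (x + a *\<^sub>R (y - x)) + t *\<^sub>R (x + b *\<^sub>R (y - x))"
      by (simp add: algebra_simps)
    then show "\<phi> ((1 - t) *\<^sub>R a + t *\<^sub>R b) \<le> (1 - t) * \<phi> a + t * \<phi> b"
      unfolding \<phi>_def using convex_onD[OF convex, of t] t by simp
  qed simp
  moreover have "(\<phi> has_real_derivative inner g (y - x)) (at 0)"
  proof -
    have "((\<lambda>t::real. x + t *\<^sub>R (y - x)) has_derivative (\<lambda>t. t *\<^sub>R (y - x))) (at 0)"
      by (intro derivative_eq_intros) auto
    moreover have "(f has_derivative (\<lambda>h. inner g h)) (at (x + (0::real) *\<^sub>R (y - x)))"
      using grad by simp
    ultimately have "(\<phi> has_derivative (\<lambda>t. inner g (t *\<^sub>R (y - x)))) (at 0)"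
      unfolding \<phi>_def by (rule has_derivative_compose)
    moreover have "(\<lambda>t. inner g (t *\<^sub>R (y - x))) = (*) (inner g (y - x))"
      by (rule ext) simp
    ultimately show ?thesis by (simp add: has_field_derivative_def)
  qed
  ultimately have "\<phi> 1 - \<phi> 0 \<ge> inner g (y - x) * (1 - 0)"
    by (intro convex_on_imp_above_tangent) auto
  then show ?thesis unfolding \<phi>_def by simp
qed

lemma convex_on_gradient_monotone:
  fixes f :: "'a::real_inner \<Rightarrow> real"
  assumes convex: "convex_on UNIV f" and grad: "\<And>x. (f has_derivative (\<lambda>h. inner (g x) h)) (at x)"
  shows "inner (g x - g y) (x - y) \<ge> 0"
  using convex_on_gradient_ineq[OF convex grad, of x y] convex_on_gradient_ineq[OF convex grad, of y x]
  by (simp add: inner_simps inner_commute algebra_simps)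

definition prox_objective :: "real \<Rightarrow> ('a::real_normed_vector \<Rightarrow> real) \<Rightarrow> 'a \<Rightarrow> 'a \<Rightarrow> real" where
  "prox_objective lam f y u = f u + (1 / (2 * lam)) * (norm (u - y))\<^sup>2"

lemma prox_objective_midpoint:
  fixes f :: "'a::real_inner \<Rightarrow> real"
  assumes "convex_on UNIV f"
  shows "prox_objective lam f y ((1/2) *\<^sub>R (u + w))
    \<le> (prox_objective lam f y u + prox_objective lam f y w) / 2 - (1 / (8 * lam)) * (norm (u - w))\<^sup>2"
proof -
  have f: "f ((1/2) *\<^sub>R (u + w)) \<le> (f u + f w) / 2"
    using convex_onD[OF assms, of "1/2" u w] by (simp add: scaleR_add_right)
  have "(1/2) *\<^sub>R (u + w) - y = (1/2) *\<^sub>R ((u - y) + (w - y))"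
    by (simp add: algebra_simps flip: scaleR_add_left)
  then have n: "(norm ((1/2) *\<^sub>R (u + w) - y))\<^sup>2
      = ((norm (u - y))\<^sup>2 + (norm (w - y))\<^sup>2) / 2 - (norm (u - w))\<^sup>2 / 4"
    by (simp only: norm_midpoint_sq) simp
  have coeff: "1 / (8 * lam) = (1 / (2 * lam)) / 4" by simp
  have "fm + t * ((nu + nw) / 2 - nuw / 4) \<le> (fu + t * nu + (fw + t * nw)) / 2 - (t / 4) * nuw"
    if "fm \<le> (fu + fw) / 2" for fm fu fw nu nw nuw t :: real
    using that by (simp add: field_simps)
  from this[OF f] show ?thesis unfolding prox_objective_def n coeff .
qed

lemma prox_minimizes:
  fixes f :: "'a::{real_inner,complete_space} \<Rightarrow> real"
  assumes convex: "convex_on UNIV f" and cont: "continuous_on UNIV f"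
    and bdd: "\<And>x. b \<le> f x" and lam: "lam > 0"
  shows "prox_objective lam f y (prox lam f y) \<le> prox_objective lam f y v"
proof -
  let ?\<phi> = "prox_objective lam f y"
  have "\<exists>u\<in>UNIV. \<forall>w\<in>UNIV. ?\<phi> u \<le> ?\<phi> w"
  proof (rule uniformly_convex_attains_min[of UNIV _ b "1 / (8 * lam)"])
    show "continuous_on UNIV ?\<phi>" unfolding prox_objective_def by (intro continuous_intros cont)
    show "b \<le> ?\<phi> u" for u unfolding prox_objective_def using bdd[of u] lam by (simp add: add_increasing2)
    show "1 / (8 * lam) > 0" using lam by simp
  qed (use prox_objective_midpoint[OF convex] in simp_all)
  then obtain u where u: "\<forall>w. ?\<phi> u \<le> ?\<phi> w" by blast
  text \<open>Uniqueness: the midpoint of two minimizers would be strictly better.\<close>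
  have unique: "w = u" if w: "\<forall>v. ?\<phi> w \<le> ?\<phi> v" for w
  proof -
    have "?\<phi> u \<le> ?\<phi> ((1/2) *\<^sub>R (u + w))" "?\<phi> w \<le> ?\<phi> u" "?\<phi> u \<le> ?\<phi> w" using u w by auto
    then have "(1 / (8 * lam)) * (norm (u - w))\<^sup>2 \<le> 0"
      using prox_objective_midpoint[OF convex, of lam y u w] by argo
    then have "(norm (u - w))\<^sup>2 \<le> 0" using lam by (simp add: divide_le_0_iff)
    then show ?thesis by simp
  qed
  have "prox lam f y = u"
    unfolding prox_def prox_objective_def[symmetric] using u unique by (rule the_equality)
  then show ?thesis using u by simp
qed

lemma prox_optimality:
  fixes f :: "'a::{real_inner,complete_space} \<Rightarrow> real"
  assumes convex: "convex_on UNIV f" and grad: "\<And>x. (f has_derivative (\<lambda>h. inner (g x) h)) (at x)"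
    and bdd: "\<And>x. b \<le> f x" and lam: "lam > 0"
  shows "y - prox lam f y = lam *\<^sub>R g (prox lam f y)"
proof -
  define u where "u = prox lam f y"
  have "continuous_on UNIV f"
    using grad has_derivative_continuous continuous_at_imp_continuous_on by blast
  then have min: "prox_objective lam f y u \<le> prox_objective lam f y v" for v
    unfolding u_def using prox_minimizes[OF convex _ bdd lam] by blast
  have "(prox_objective lam f y has_derivative
     (\<lambda>h. inner (g u) h + (1 / (2 * lam)) * (inner h (u - y) + inner (u - y) h))) (at u)"
    unfolding prox_objective_def power2_norm_eq_inner
    by (intro derivative_eq_intros) (auto intro: grad)
  then have "(\<lambda>h. inner (g u) h + (1 / (2 * lam)) * (inner h (u - y) + inner (u - y) h)) = (\<lambda>h. 0)"
    by (rule has_derivative_local_min) (use min in auto)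
  then have "inner (g u) h + (1 / lam) * inner (u - y) h = 0" for h
    by (drule_tac fun_cong[of _ _ h]) (simp add: inner_commute)
  then have "inner (lam *\<^sub>R g u + (u - y)) h = 0" for h
    using lam by (simp add: inner_simps field_simps)
  then have "lam *\<^sub>R g u + (u - y) = 0" by (metis inner_eq_zero_iff)
  then show ?thesis unfolding u_def[symmetric] by (simp add: algebra_simps)
qed
section \<open>The proximal point method\<close>

lemma decseq_weighted_summable_little_o:
  fixes e lam :: "nat \<Rightarrow> real" and c q :: real
  assumes e_nonneg: "\<And>k. 0 \<le> e k" and e_dec: "decseq e" and lam_nonneg: "\<And>k. 0 \<le> lam k"
    and summable: "summable (\<lambda>k. lam k * e (Suc k))"
    and c: "c > 0" and q: "q \<ge> 0"
    and growth: "eventually (\<lambda>k. c * real k powr q \<le> lam k) sequentially"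
  shows "(\<lambda>k. e (Suc k)) \<in> o(\<lambda>k. real k powr - (1 + q))"
proof -
  define a where "a k = lam k * e (Suc k)" for k
  obtain N0 where N0: "\<And>k. k \<ge> N0 \<Longrightarrow> c * real k powr q \<le> lam k"
    using growth by (auto simp: eventually_sequentially)
  text \<open>The \<open>n\<close> terms of the tail after \<open>n\<close> each dominate \<open>c n\<^sup>q e\<^sub>2\<^sub>n\<close>.\<close>
  have tail: "c * real n powr (1 + q) * e (2 * n) \<le> (\<Sum>i. a (i + n))" if n: "n \<ge> N0" for n
  proof -
    have "c * real n powr (1 + q) * e (2 * n) = (\<Sum>i<n. c * real n powr q * e (2 * n))"
      by (cases "n = 0") (simp_all add: powr_add)
    also have "\<dots> \<le> (\<Sum>i<n. a (i + n))"
    proof (rule sum_mono)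
      fix i assume "i \<in> {..<n}"
      have "c * real n powr q \<le> c * real (i + n) powr q" using c q by (intro mult_left_mono powr_mono2) auto
      also have "\<dots> \<le> lam (i + n)" using n by (intro N0) auto
      finally show "c * real n powr q * e (2 * n) \<le> a (i + n)" unfolding a_def
        using \<open>i \<in> {..<n}\<close> e_nonneg lam_nonneg decseqD[OF e_dec, of "Suc (i + n)" "2 * n"]
        by (intro mult_mono) auto
    qed
    also have "\<dots> \<le> (\<Sum>i. a (i + n))"
      using summable_ignore_initial_segment[OF summable[folded a_def]] e_nonneg lam_nonneg
      by (intro sum_le_suminf) (auto simp: a_def)
    finally show ?thesis .
  qed
  show ?thesis
  proof (rule landau_o.smallI)
    fix \<epsilon> :: real assume \<epsilon>: "\<epsilon> > 0"
    define r where "r = \<epsilon> * c / 2 powr (1 + q)"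
    have "r > 0" unfolding r_def using \<epsilon> c by simp
    then obtain N where N: "\<And>n. n \<ge> N \<Longrightarrow> norm (\<Sum>i. a (i + n)) < r"
      using suminf_exist_split[OF _ summable[folded a_def]] by blast
    have "e (Suc k) \<le> \<epsilon> * real k powr - (1 + q)" if k: "Suc (2 * max N N0) \<le> k" for k
    proof -
      define n where "n = Suc k div 2"
      have n: "n \<ge> N" "n \<ge> N0" "2 * n \<le> Suc k" "k \<le> 2 * n" and "k > 0"
        using k unfolding n_def by auto
      have "real k powr (1 + q) \<le> (2 * real n) powr (1 + q)" using n q by (intro powr_mono2) auto
      then have "e (Suc k) * real k powr (1 + q) \<le> e (2 * n) * (2 powr (1 + q) * real n powr (1 + q))"
        using decseqD[OF e_dec n(3)] e_nonneg by (intro mult_mono) (auto simp: powr_mult)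
      also have "\<dots> = 2 powr (1 + q) / c * (c * real n powr (1 + q) * e (2 * n))"
        using c by (simp add: field_simps)
      also have "\<dots> \<le> 2 powr (1 + q) / c * r"
        using tail[OF n(2)] N[OF n(1)] c by (intro mult_left_mono) auto
      also have "\<dots> = \<epsilon>" unfolding r_def using c by simp
      finally have "e (Suc k) \<le> \<epsilon> / real k powr (1 + q)" using \<open>k > 0\<close> by (simp add: field_simps)
      then show ?thesis unfolding powr_minus_divide by simp
    qed
    then show "\<forall>\<^sub>F k in sequentially. norm (e (Suc k)) \<le> \<epsilon> * norm (real k powr - (1 + q))"
      using e_nonneg by (intro eventually_sequentiallyI) auto
  qed
qed

lemma sum_of_nat_lower_bound:
  assumes "n \<ge> 2"
  shows "(real n)\<^sup>2 / 4 \<le> (\<Sum>k<n. real k)"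
proof -
  have "2 * (\<Sum>k<n. real k) = real n * real n - real n"
    by (induction n) (auto simp: algebra_simps)
  moreover have "2 * real n \<le> real n * real n" using assms by (intro mult_right_mono) auto
  ultimately show ?thesis unfolding power2_eq_square by linarith
qed

locale proximal_point =
  fixes f :: "'a::{real_inner,complete_space} \<Rightarrow> real" and g :: "'a \<Rightarrow> 'a"
    and y :: "nat \<Rightarrow> 'a" and lam :: "nat \<Rightarrow> real"
  assumes convex: "convex_on UNIV f"
    and gradient: "\<And>x. (f has_derivative (\<lambda>h. inner (g x) h)) (at x)"
    and has_minimizer: "\<exists>s. \<forall>x. f s \<le> f x"
    and lam_pos: "\<And>k. lam k > 0"
    and y_Suc: "\<And>k. y (Suc k) = prox (lam k) f (y k)"
begin

lemma prox_step: "y k - y (Suc k) = lam k *\<^sub>R g (y (Suc k))"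
  using has_minimizer prox_optimality[OF convex gradient _ lam_pos] unfolding y_Suc by blast

lemma norm_gradient_decreasing: "norm (g (y (Suc k))) \<le> norm (g (y k))"
proof -
  define u v where "u = g (y (Suc k))" and "v = g (y k)"
  have "0 \<le> inner (u - v) (y (Suc k) - y k)"
    unfolding u_def v_def by (rule convex_on_gradient_monotone[OF convex gradient])
  also have "\<dots> = - lam k * inner (u - v) u"
    using prox_step[of k] unfolding u_def v_def by (simp add: algebra_simps flip: inner_scaleR_right)
  finally have "inner u u \<le> inner v u"
    using lam_pos[of k] by (simp add: inner_diff_left mult_le_0_iff)
  also have "\<dots> \<le> norm v * norm u" by (rule order_trans[OF abs_ge_self Cauchy_Schwarz_ineq2])
  finally have "norm u * norm u \<le> norm v * norm u" by (simp flip: power2_norm_eq_inner power2_eq_square)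
  then have "norm u \<le> norm v" by (cases "norm u = 0") (auto simp: mult_le_cancel_right)
  then show ?thesis unfolding u_def v_def .
qed

lemma norm_gradient_decseq: "decseq (\<lambda>k. norm (g (y k)))"
  using norm_gradient_decreasing by (rule decseq_SucI)

lemma value_descent: "f (y (Suc k)) + lam k * (norm (g (y (Suc k))))\<^sup>2 \<le> f (y k)"
  using convex_on_gradient_ineq[OF convex gradient, of "y (Suc k)" "y k"]
  by (simp add: prox_step power2_norm_eq_inner)

lemma values_decseq: "decseq (\<lambda>k. f (y k))"
proof (rule decseq_SucI)
  show "f (y (Suc k)) \<le> f (y k)" for k
    using value_descent[of k] lam_pos[of k] zero_le_power2[of "norm (g (y (Suc k)))"]
    by (smt (verit) mult_nonneg_nonneg)
qed

lemma fejer: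
  assumes z: "\<And>x. f z \<le> f x"
  shows "(norm (y (Suc k) - z))\<^sup>2 + 2 * lam k * (f (y (Suc k)) - f z) \<le> (norm (y k - z))\<^sup>2"
proof -
  define d where "d = y k - y (Suc k)"
  have "(norm (y k - z))\<^sup>2 = (norm d)\<^sup>2 + 2 * inner d (y (Suc k) - z) + (norm (y (Suc k) - z))\<^sup>2"
    unfolding d_def power2_norm_eq_inner by (simp add: inner_simps inner_commute)
  moreover have "lam k * (f (y (Suc k)) - f z) \<le> inner d (y (Suc k) - z)"
  proof -
    have "f (y (Suc k)) - f z \<le> inner (g (y (Suc k))) (y (Suc k) - z)"
      using convex_on_gradient_ineq[OF convex gradient, of "y (Suc k)" z] by (simp add: inner_diff_right)
    then have "lam k * (f (y (Suc k)) - f z) \<le> lam k * inner (g (y (Suc k))) (y (Suc k) - z)"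
      using lam_pos[of k] by (intro mult_left_mono) auto
    also have "\<dots> = inner d (y (Suc k) - z)" unfolding d_def prox_step by simp
    finally show ?thesis .
  qed
  ultimately show ?thesis using zero_le_power2[of "norm d"] by linarith
qed

lemma dist_minimizer_decseq:
  assumes z: "\<And>x. f z \<le> f x"
  shows "decseq (\<lambda>k. norm (y k - z))"
proof (rule decseq_SucI)
  fix k
  have "lam k * (f (y (Suc k)) - f z) \<ge> 0" using lam_pos[of k] z[of "y (Suc k)"] by simp
  then have "(norm (y (Suc k) - z))\<^sup>2 \<le> (norm (y k - z))\<^sup>2" using fejer[OF z, of k] by linarith
  then show "norm (y (Suc k) - z) \<le> norm (y k - z)" by (rule power2_le_imp_le) simp
qed

lemma weighted_gap_nonneg:
  assumes z: "\<And>x. f z \<le> f x"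
  shows "0 \<le> lam k * (f (y (Suc k)) - f z)"
  using lam_pos[of k] z[of "y (Suc k)"] by simp

lemma summable_weighted_gap:
  assumes z: "\<And>x. f z \<le> f x"
  shows "summable (\<lambda>k. lam k * (f (y (Suc k)) - f z))"
proof (rule summableI_nonneg_bounded)
  show "0 \<le> lam k * (f (y (Suc k)) - f z)" for k by (rule weighted_gap_nonneg[OF z])
  fix n
  have "2 * (\<Sum>k<n. lam k * (f (y (Suc k)) - f z)) \<le> (norm (y 0 - z))\<^sup>2 - (norm (y n - z))\<^sup>2"
  proof (induction n)
    case (Suc n)
    have "(\<Sum>k<Suc n. lam k * (f (y (Suc k)) - f z))
        = (\<Sum>k<n. lam k * (f (y (Suc k)) - f z)) + lam n * (f (y (Suc n)) - f z)" by simp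
    then show ?case using Suc.IH fejer[OF z, of n, unfolded mult.assoc] by linarith
  qed simp
  then show "(\<Sum>k<n. lam k * (f (y (Suc k)) - f z)) \<le> (norm (y 0 - z))\<^sup>2 / 2"
    using zero_le_power2[of "norm (y n - z)"] by linarith
qed

lemma weighted_descent_sum:
  "(\<Sum>k<n. real k * lam k * (norm (g (y (Suc k))))\<^sup>2) + real n * (f (y n) - f z)
     \<le> (\<Sum>k<n. f (y (Suc k)) - f z)"
proof (induction n)
  case (Suc n)
  have "real n * (f (y (Suc n)) - f z + lam n * (norm (g (y (Suc n))))\<^sup>2) \<le> real n * (f (y n) - f z)"
    using value_descent[of n] by (intro mult_left_mono) auto
  then show ?case using Suc by (simp add: algebra_simps)
qed simp

end

locale proximal_point_bounded_steps = proximal_point +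
  fixes lmin :: real
  assumes lmin_pos: "lmin > 0" and lmin_le: "\<And>k. lmin \<le> lam k"
begin

lemma values_tendsto_min:
  assumes z: "\<And>x. f z \<le> f x"
  shows "(\<lambda>k. f (y k)) \<longlonglongrightarrow> f z"
proof -
  have gap_le: "f (y (Suc k)) - f z \<le> lam k * (f (y (Suc k)) - f z) / lmin" for k
  proof -
    have "f (y (Suc k)) - f z = lmin * (f (y (Suc k)) - f z) / lmin" using lmin_pos by simp
    also have "\<dots> \<le> lam k * (f (y (Suc k)) - f z) / lmin"
      using lmin_le z lmin_pos by (intro divide_right_mono mult_right_mono) auto
    finally show ?thesis .
  qed
  have "(\<lambda>k. lam k * (f (y (Suc k)) - f z) / lmin) \<longlonglongrightarrow> 0"
    by (intro tendsto_divide_zero summable_LIMSEQ_zero summable_weighted_gap z)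
  then have "(\<lambda>k. f (y (Suc k)) - f z) \<longlonglongrightarrow> 0"
    by (rule tendsto_sandwich[OF always_eventually always_eventually tendsto_const, rotated 2])
      (use z gap_le in auto)
  then show ?thesis by (rule LIMSEQ_imp_Suc[OF LIM_zero_cancel])
qed

lemma weak_cluster_point_minimizer:
  assumes r: "strict_mono r" and w: "weakly_converges (y \<circ> r) z"
  shows "f z \<le> f x"
proof -
  obtain s where s: "\<And>x. f s \<le> f x" using has_minimizer by blast
  text \<open>Weak lower semicontinuity of \<open>f\<close>, through its supporting hyperplane at \<open>z\<close>.\<close>
  have "(\<lambda>j. inner (y (r j)) (g z)) \<longlonglongrightarrow> inner z (g z)"
    using w unfolding weakly_converges_def comp_def by blast
  then have "(\<lambda>j. f z + (inner (y (r j)) (g z) - inner z (g z))) \<longlonglongrightarrow> f z + (inner z (g z) - inner z (g z))"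
    by (intro tendsto_add tendsto_diff tendsto_const)
  then have "(\<lambda>j. f z + inner (g z) (y (r j) - z)) \<longlonglongrightarrow> f z"
    by (simp add: inner_diff_right inner_commute)
  moreover have "(\<lambda>j. f (y (r j))) \<longlonglongrightarrow> f s"
    using LIMSEQ_subseq_LIMSEQ[OF values_tendsto_min[OF s] r] by (simp add: comp_def)
  ultimately have "f z \<le> f s"
    using convex_on_gradient_ineq[OF convex gradient] by (blast intro: LIMSEQ_le)
  then show ?thesis using s order_trans by blast
qed

theorem weakly_converges_to_minimizer: "\<exists>z. (\<forall>x. f z \<le> f x) \<and> weakly_converges y z"
proof -
  have "\<exists>z\<in>{z. \<forall>x. f z \<le> f x}. weakly_converges y z"
  proof (rule opial_weak_convergence)
    show "{z. \<forall>x. f z \<le> f x} \<noteq> {}" using has_minimizer by blast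
  next
    fix z assume "z \<in> {z. \<forall>x. f z \<le> f x}"
    then have "decseq (\<lambda>k. norm (y k - z))" using dist_minimizer_decseq by simp
    then show "convergent (\<lambda>k. norm (y k - z))"
      by (rule decseq_convergent[of _ 0]) (auto simp: convergent_def)
  qed (use weak_cluster_point_minimizer in blast)
  then show ?thesis by blast
qed

lemma gap_partial_sums_bounded:
  assumes z: "\<And>x. f z \<le> f x"
  shows "(\<Sum>k<n. f (y (Suc k)) - f z) \<le> (\<Sum>k. lam k * (f (y (Suc k)) - f z)) / lmin"
proof -
  have "lmin * (\<Sum>k<n. f (y (Suc k)) - f z) \<le> (\<Sum>k<n. lam k * (f (y (Suc k)) - f z))"
    unfolding sum_distrib_left using z lmin_le by (intro sum_mono mult_right_mono) auto
  also have "\<dots> \<le> (\<Sum>k. lam k * (f (y (Suc k)) - f z))"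
    using summable_weighted_gap[OF z] weighted_gap_nonneg[OF z] by (intro sum_le_suminf) auto
  finally show ?thesis using lmin_pos by (simp add: field_simps)
qed

lemma gradient_norm_bound: "\<exists>C. \<forall>n\<ge>2. norm (g (y n)) \<le> C / real n"
proof -
  obtain z where z: "\<And>x. f z \<le> f x" using has_minimizer by blast
  define B where "B = (\<Sum>k. lam k * (f (y (Suc k)) - f z)) / lmin"
  have "norm (g (y n)) \<le> sqrt (4 * B / lmin) / real n" if n: "n \<ge> 2" for n
  proof -
    define G where "G = norm (g (y n))"
    have "lmin * G\<^sup>2 * ((real n)\<^sup>2 / 4) \<le> lmin * G\<^sup>2 * (\<Sum>k<n. real k)"
      using lmin_pos sum_of_nat_lower_bound[OF n] by (intro mult_left_mono) auto
    also have "\<dots> = (\<Sum>k<n. real k * lmin * G\<^sup>2)" by (simp add: sum_distrib_left sum_distrib_right mult_ac)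
    also have "\<dots> \<le> (\<Sum>k<n. real k * lam k * (norm (g (y (Suc k))))\<^sup>2)"
    proof (rule sum_mono)
      fix k assume "k \<in> {..<n}"
      then have "G \<le> norm (g (y (Suc k)))" unfolding G_def
        using decseqD[OF norm_gradient_decseq] by simp
      then show "real k * lmin * G\<^sup>2 \<le> real k * lam k * (norm (g (y (Suc k))))\<^sup>2"
        using lmin_le[of k] lmin_pos unfolding G_def by (intro mult_mono mult_left_mono power_mono) auto
    qed
    also have "\<dots> \<le> B"
      using weighted_descent_sum[of n z] gap_partial_sums_bounded[OF z, of n, folded B_def]
        mult_nonneg_nonneg[OF of_nat_0_le_iff[of n], of "f (y n) - f z"] z[of "y n"]
      by linarith
    finally have "(G * real n)\<^sup>2 \<le> 4 * B / lmin" using lmin_pos by (simp add: field_simps power_mult_distrib)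
    then have "G * real n \<le> sqrt (4 * B / lmin)" by (rule real_le_rsqrt)
    then show ?thesis using n unfolding G_def by (simp add: field_simps)
  qed
  then show ?thesis by blast
qed

end

lemma powr_growth_of_inverse_bound:
  fixes G :: "nat \<Rightarrow> real"
  assumes bound: "\<And>n. n \<ge> 2 \<Longrightarrow> G n \<le> C / real n" and G_pos: "\<And>n. G n > 0" and q: "q \<ge> 0"
  shows "C > 0" and "eventually (\<lambda>n. C powr - q * real n powr q \<le> G n powr - q) sequentially"
proof -
  show "C > 0" using bound[of 2] G_pos[of 2] by simp
  have "C powr - q * real n powr q \<le> G n powr - q" if n: "n \<ge> 2" for n
  proof -
    have "C powr - q * real n powr q = C powr - q / real n powr - q"
      by (simp add: powr_minus divide_inverse)
    also have "\<dots> = (C / real n) powr - q" using \<open>C > 0\<close> by (simp add: powr_divide)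
    also have "\<dots> \<le> G n powr - q" using bound[OF n] G_pos[of n] q by (intro powr_mono2') auto
    finally show ?thesis .
  qed
  then show "eventually (\<lambda>n. C powr - q * real n powr q \<le> G n powr - q) sequentially"
    by (intro eventually_sequentiallyI)
qed

theorem mainTheorem14:
  fixes f :: "'a::{real_inner, complete_space} \<Rightarrow> real"
    and gradf :: "'a \<Rightarrow> 'a"
    and p :: real
    and y :: "nat \<Rightarrow> 'a"
    and lam :: "nat \<Rightarrow> real"
  assumes convex: "convex_on UNIV f"
    and grad: "\<And>x. (f has_derivative (\<lambda>h. inner (gradf x) h)) (at x)"
    and grad_cont: "continuous_on UNIV gradf"
    and S_nonempty: "\<exists>x. \<forall>z. f x \<le> f z"
    and grad_lip: "\<And>B. bounded B \<Longrightarrow>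
          \<exists>L. \<forall>x\<in>B. \<forall>z\<in>B. norm (gradf x - gradf z) \<le> L * norm (x - z)"
    and p_ge: "p \<ge> 1"
    and lam_def: "\<And>k. lam k = norm (gradf (y k)) powr (- ((p - 1) / p))"
    and y_rec: "\<And>k. y (Suc k) = prox (lam k) f (y k)"
    and grad_nz: "\<And>k. gradf (y k) \<noteq> 0"
  shows "(\<lambda>k. f (y (Suc k)) - (INF x. f x)) \<in> o(\<lambda>k. real k powr (- (2 - 1 / p)))
         \<and> (\<exists>z. (\<forall>x. f z \<le> f x) \<and> weakly_converges y z)"
proof -
  obtain s where s: "\<And>x. f s \<le> f x" using S_nonempty by blast
  define q where "q = (p - 1) / p"
  have q: "q \<ge> 0" and exponent: "2 - 1 / p = 1 + q" unfolding q_def using p_ge by (auto simp: field_simps)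
  have lam_G: "lam k = norm (gradf (y k)) powr - q" for k unfolding lam_def q_def ..
  interpret proximal_point f gradf y lam
    using convex grad S_nonempty y_rec grad_nz by unfold_locales (simp_all add: lam_G)
  have "lam 0 \<le> lam k" for k
    unfolding lam_G using q grad_nz decseqD[OF norm_gradient_decseq, of 0 k] by (intro powr_mono2') auto
  then interpret proximal_point_bounded_steps f gradf y lam "lam 0"
    by unfold_locales (simp_all add: lam_pos)
  obtain C where C: "\<And>n. n \<ge> 2 \<Longrightarrow> norm (gradf (y n)) \<le> C / real n"
    using gradient_norm_bound by blast
  have G_pos: "\<And>n. 0 < norm (gradf (y n))" using grad_nz by simp
  note growth = powr_growth_of_inverse_bound[OF C G_pos q, folded lam_G]
  have "(\<lambda>k. f (y (Suc k)) - f s) \<in> o(\<lambda>k. real k powr - (1 + q))"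
    using s lam_pos q growth summable_weighted_gap[OF s] values_decseq
    by (intro decseq_weighted_summable_little_o[where e = "\<lambda>k. f (y k) - f s"])
      (auto simp: decseq_def less_imp_le)
  moreover have "(INF x. f x) = f s" by (rule cInf_eq_minimum) (auto intro: s)
  ultimately show ?thesis using weakly_converges_to_minimizer unfolding exponent by simp
qed

end
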